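(* Let $s\ge2$, $\eta>0$ and $z\in\mathbb{R}_{\ge0}^s$ with $\sum_j z_j>0$ not a constant vector. Let $\tilde z_k=\max\big(z_k-\eta\frac{\partial\mathcal{H}}{\partial z_k}(z),0\big)$ (with $\tilde z_k=0$ when $z_k=0$). Then $\tilde z$ is not a constant vector. Hence, iterating this update from a non-uniform initial vector, the masses never become uniform.
   Context: $\mathcal{H}(z)=-\sum_i \frac{z_i}{\sum_j z_j}\log\frac{z_i}{\sum_j z_j}$ with $0\log0=0$; for $z_k>0$ the gradient is the partial derivative, and for $z_k=0$ it is regarded as $+\infty$. *)

theory Defs
  imports "HOL-Analysis.Analysis"
begin

text \<open>Vectors in the nonnegative orthant of R^s are represented as functions
  nat => real; only the coordinates 0..s-1 are meaningful.\<close>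

definition shannon_H :: "nat \<Rightarrow> (nat \<Rightarrow> real) \<Rightarrow> real" where
  "shannon_H s z = (let S = (\<Sum>j<s. z j) in
     - (\<Sum>i<s. if z i = 0 then 0 else (z i / S) * ln (z i / S)))"

definition partial_H :: "nat \<Rightarrow> (nat \<Rightarrow> real) \<Rightarrow> nat \<Rightarrow> real" where
  "partial_H s z k = deriv (\<lambda>t. shannon_H s (z(k := t))) (z k)"

text \<open>One update step: for z k > 0, max (z k - eta * dH/dz_k) 0; for z k = 0 the
  gradient is +infinity, so the new coordinate is 0.\<close>
definition H_step :: "nat \<Rightarrow> real \<Rightarrow> (nat \<Rightarrow> real) \<Rightarrow> (nat \<Rightarrow> real)" where
  "H_step s \<eta> z = (\<lambda>k. if k < s \<and> z k > 0 then max (z k - \<eta> * partial_H s z k) 0 else 0)"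

definition const_vec :: "nat \<Rightarrow> (nat \<Rightarrow> real) \<Rightarrow> bool" where
  "const_vec s z \<longleftrightarrow> (\<forall>i<s. \<forall>j<s. z i = z j)"

end

theory Submission
  imports Defs
begin

text \<open>With \<open>S = \<Sum>j z\<^sub>j\<close> and \<open>T = \<Sum>i z\<^sub>i ln z\<^sub>i\<close> one has \<open>H = ln S - T / S\<close>, hence
  \<open>\<partial>H/\<partial>z\<^sub>k = (T / S - ln z\<^sub>k) / S\<close>, which is strictly decreasing in \<open>z\<^sub>k\<close>. So the
  update \<open>z\<^sub>k - \<eta> \<partial>H/\<partial>z\<^sub>k\<close> is strictly increasing in \<open>z\<^sub>k\<close>, and at a largest
  coordinate the gradient is nonpositive because \<open>T / S \<le> ln (max z)\<close>. A largest
  coordinate therefore stays positive and strictly above every coordinate that was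
  smaller before the step, even after truncation at 0.\<close>

definition nonuniform_mass :: "nat \<Rightarrow> (nat \<Rightarrow> real) \<Rightarrow> bool" where
  "nonuniform_mass s z \<longleftrightarrow> (\<forall>i<s. 0 \<le> z i) \<and> 0 < (\<Sum>j<s. z j) \<and> \<not> const_vec s z"

lemma sum_fun_upd:
  fixes f :: "'a \<Rightarrow> 'b::ab_group_add"
  assumes "finite A" and "k \<in> A"
  shows "sum (f(k := t)) A = sum f A - f k + t"
proof -
  have "sum (f(k := t)) (A - {k}) = sum f (A - {k})"
    by (rule sum.cong) auto
  then show ?thesis
    using assms by (simp add: sum.remove algebra_simps)
qed

lemma shannon_H_eq:
  assumes nonneg: "\<forall>i<s. 0 \<le> z i" and pos: "0 < (\<Sum>j<s. z j)"
  shows "shannon_H s z = ln (\<Sum>j<s. z j) - (\<Sum>i<s. z i * ln (z i)) / (\<Sum>j<s. z j)"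
proof -
  define S where "S = (\<Sum>j<s. z j)"
  have "S > 0" using pos S_def by simp
  have term_eq: "(if z i = 0 then 0 else z i / S * ln (z i / S)) = z i * ln (z i) / S - ln S * (z i / S)"
    if "i < s" for i
  proof (cases "z i = 0")
    case False
    then have "z i > 0" using nonneg that by force
    then show ?thesis using \<open>S > 0\<close> by (simp add: ln_div field_simps)
  qed simp
  have "shannon_H s z = - (\<Sum>i<s. z i * ln (z i) / S - ln S * (z i / S))"
    unfolding shannon_H_def Let_def S_def[symmetric] using term_eq by simp
  also have "\<dots> = ln S * ((\<Sum>i<s. z i) / S) - (\<Sum>i<s. z i * ln (z i)) / S"
    by (simp add: sum_subtractf sum_distrib_left sum_divide_distrib)
  finally show ?thesis using \<open>S > 0\<close> S_def by simp
qed

lemma partial_H_eq: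
  assumes nonneg: "\<forall>i<s. 0 \<le> z i" and pos: "0 < (\<Sum>j<s. z j)" and "k < s" and "0 < z k"
  shows "partial_H s z k = ((\<Sum>i<s. z i * ln (z i)) / (\<Sum>j<s. z j) - ln (z k)) / (\<Sum>j<s. z j)"
proof -
  define S where "S = (\<Sum>j<s. z j)"
  define T where "T = (\<Sum>i<s. z i * ln (z i))"
  have "z k \<le> S" unfolding S_def using \<open>k < s\<close> nonneg by (intro member_le_sum) auto
  define g where "g t = ln (S - z k + t) - (T - z k * ln (z k) + t * ln t) / (S - z k + t)" for t
  have H_eq_g: "shannon_H s (z(k := t)) = g t" if "t \<in> {0<..}" for t
  proof -
    have S_upd: "(\<Sum>j<s. (z(k := t)) j) = S - z k + t"
      unfolding S_def using sum_fun_upd[of "{..<s}" k z t] \<open>k < s\<close> by simp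
    have "(\<lambda>j. (z(k := t)) j * ln ((z(k := t)) j)) = (\<lambda>j. z j * ln (z j))(k := t * ln t)"
      by auto
    then have T_upd: "(\<Sum>j<s. (z(k := t)) j * ln ((z(k := t)) j)) = T - z k * ln (z k) + t * ln t"
      unfolding T_def using sum_fun_upd[of "{..<s}" k _ "t * ln t"] \<open>k < s\<close> by (simp only:) simp
    have "0 < (\<Sum>j<s. (z(k := t)) j)"
      using S_upd \<open>z k \<le> S\<close> that by simp
    moreover have "\<forall>i<s. 0 \<le> (z(k := t)) i" using nonneg that by auto
    ultimately show ?thesis
      using shannon_H_eq S_upd T_upd g_def by simp
  qed
  have "(g has_real_derivative 1 / S - ((ln (z k) + 1) * S - T) / S\<^sup>2) (at (z k))"
    unfolding g_def using \<open>0 < z k\<close> \<open>z k \<le> S\<close>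
    by (auto intro!: derivative_eq_intros simp: power2_eq_square)
  then have "((\<lambda>t. shannon_H s (z(k := t))) has_real_derivative
      1 / S - ((ln (z k) + 1) * S - T) / S\<^sup>2) (at (z k))"
    by (rule has_field_derivative_transform_within_open[where S="{0<..}"])
      (use \<open>0 < z k\<close> H_eq_g in auto)
  then have "partial_H s z k = 1 / S - ((ln (z k) + 1) * S - T) / S\<^sup>2"
    unfolding partial_H_def by (rule DERIV_imp_deriv)
  also have "\<dots> = (T / S - ln (z k)) / S"
    using \<open>0 < z k\<close> \<open>z k \<le> S\<close> by (simp add: field_simps power2_eq_square)
  finally show ?thesis using S_def T_def by simp
qed

lemma partial_H_less:
  assumes nonneg: "\<forall>i<s. 0 \<le> z i" and pos: "0 < (\<Sum>j<s. z j)"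
    and "i < s" and "k < s" and "0 < z i" and "z i < z k"
  shows "partial_H s z k < partial_H s z i"
proof -
  have "ln (z i) < ln (z k)" using assms by simp
  then show ?thesis
    using partial_H_eq[OF nonneg pos \<open>i < s\<close>] partial_H_eq[OF nonneg pos \<open>k < s\<close>] assms
    by (simp add: divide_strict_right_mono)
qed

lemma partial_H_nonpos_at_max:
  assumes nonneg: "\<forall>i<s. 0 \<le> z i" and "j < s" and "0 < z j" and max: "\<forall>i<s. z i \<le> z j"
  shows "partial_H s z j \<le> 0"
proof -
  define S where "S = (\<Sum>j<s. z j)"
  have "z j \<le> S" unfolding S_def using \<open>j < s\<close> nonneg by (intro member_le_sum) auto
  have "(\<Sum>i<s. z i * ln (z i)) \<le> (\<Sum>i<s. z i * ln (z j))"
  proof (rule sum_mono)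
    fix i assume "i \<in> {..<s}"
    then have "0 \<le> z i" and "z i \<le> z j" using nonneg max by auto
    then show "z i * ln (z i) \<le> z i * ln (z j)"
      using \<open>0 < z j\<close> by (cases "z i = 0") (auto intro: mult_left_mono)
  qed
  then have "(\<Sum>i<s. z i * ln (z i)) / S \<le> ln (z j)"
    using \<open>0 < z j\<close> \<open>z j \<le> S\<close> by (simp add: S_def divide_le_eq sum_distrib_right[symmetric] mult.commute)
  then show ?thesis
    using partial_H_eq[OF nonneg _ \<open>j < s\<close> \<open>0 < z j\<close>] \<open>0 < z j\<close> \<open>z j \<le> S\<close>
    by (simp add: S_def divide_le_0_iff)
qed

lemma H_step_nonneg: "0 \<le> H_step s \<eta> z i"
  unfolding H_step_def by simp

lemma H_step_ge_at_max:
  assumes "\<forall>i<s. 0 \<le> z i" and "0 \<le> \<eta>" and "j < s" and "0 < z j" and "\<forall>i<s. z i \<le> z j"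
  shows "z j \<le> H_step s \<eta> z j"
  using partial_H_nonpos_at_max[OF assms(1,3-5)] assms(2-4)
  by (simp add: H_step_def mult_nonneg_nonpos le_max_iff_disj)

lemma H_step_less_at_max:
  assumes nonneg: "\<forall>i<s. 0 \<le> z i" and "0 \<le> \<eta>" and "i < s" and "j < s"
    and "z i < z j" and max: "\<forall>i<s. z i \<le> z j"
  shows "H_step s \<eta> z i < H_step s \<eta> z j"
proof -
  have "0 < z j" using nonneg \<open>i < s\<close> \<open>z i < z j\<close> by force
  have ge: "z j \<le> H_step s \<eta> z j"
    using H_step_ge_at_max[OF nonneg \<open>0 \<le> \<eta>\<close> \<open>j < s\<close> \<open>0 < z j\<close> max] .
  show ?thesis
  proof (cases "0 < z i")
    case False
    then show ?thesis using ge \<open>0 < z j\<close> by (simp add: H_step_def)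
  next
    case True
    have "z j \<le> (\<Sum>j<s. z j)"
      using \<open>j < s\<close> nonneg by (intro member_le_sum) auto
    then have "partial_H s z j < partial_H s z i"
      using partial_H_less[OF nonneg _ \<open>i < s\<close> \<open>j < s\<close> True \<open>z i < z j\<close>] \<open>0 < z j\<close>
      by linarith
    then have "\<eta> * partial_H s z j \<le> \<eta> * partial_H s z i"
      using \<open>0 \<le> \<eta>\<close> by (simp add: mult_left_mono)
    then have "z i - \<eta> * partial_H s z i < z j - \<eta> * partial_H s z j"
      using \<open>z i < z j\<close> by linarith
    then show ?thesis
      using ge \<open>0 < z j\<close> True \<open>i < s\<close> \<open>j < s\<close> by (auto simp: H_step_def)
  qed
qed

lemma nonuniform_mass_H_step:
  assumes "0 \<le> \<eta>" and "nonuniform_mass s z"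
  shows "nonuniform_mass s (H_step s \<eta> z)"
proof -
  have nonneg: "\<forall>i<s. 0 \<le> z i" and nonconst: "\<not> const_vec s z"
    using assms(2) by (auto simp: nonuniform_mass_def)
  then obtain i0 where "i0 < s" by (auto simp: const_vec_def)
  then have "Max (z ` {..<s}) \<in> z ` {..<s}"
    by (intro Max_in) auto
  then obtain j where "j < s" and "z j = Max (z ` {..<s})"
    by auto
  then have max: "\<forall>i<s. z i \<le> z j" by simp
  obtain i where "i < s" and "z i \<noteq> z j"
    using nonconst \<open>j < s\<close> unfolding const_vec_def by metis
  then have "z i < z j" using max by force
  then have less: "H_step s \<eta> z i < H_step s \<eta> z j"
    using H_step_less_at_max[OF nonneg assms(1) \<open>i < s\<close> \<open>j < s\<close> _ max] by blast
  have "0 < H_step s \<eta> z j"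
    using less H_step_nonneg[of s \<eta> z i] by linarith
  also have "\<dots> \<le> (\<Sum>k<s. H_step s \<eta> z k)"
    using \<open>j < s\<close> by (intro member_le_sum) (auto simp: H_step_nonneg)
  finally have "0 < (\<Sum>k<s. H_step s \<eta> z k)" .
  moreover have "\<not> const_vec s (H_step s \<eta> z)"
    using less \<open>i < s\<close> \<open>j < s\<close> unfolding const_vec_def by (metis less_irrefl)
  ultimately show ?thesis
    by (simp add: nonuniform_mass_def H_step_nonneg)
qed

theorem corollary5:
  fixes s :: nat and \<eta> :: real and z :: "nat \<Rightarrow> real"
  assumes "s \<ge> 2" and "\<eta> > 0"
    and "\<forall>i<s. z i \<ge> 0" and "(\<Sum>j<s. z j) > 0"
    and "\<not> const_vec s z"
  shows "\<not> const_vec s (H_step s \<eta> z) \<and> (\<forall>n. \<not> const_vec s ((H_step s \<eta> ^^ n) z))"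
proof -
  have iterates: "nonuniform_mass s ((H_step s \<eta> ^^ n) z)" for n
  proof (induction n)
    case 0
    show ?case using assms(3-5) by (simp add: nonuniform_mass_def)
  next
    case (Suc n)
    then show ?case using nonuniform_mass_H_step \<open>\<eta> > 0\<close> by simp
  qed
  then show ?thesis
    using iterates[of 1] by (simp add: nonuniform_mass_def)
qed

end
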